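(* Let $K$ be a finite field of order $q$ and $s$ a positive integer with $\gcd(s,q-1)=1$. For any positive integer $k$, any $b,t_1,\dots,t_k\in K^\times$ and any $a\in K$, $$Q^{(t_1,\dots,t_k)}_{a,b}=\frac{Q^{(a/b,t_1,\dots,t_k)}_{0,0}-Q^{(t_1,\dots,t_k)}_{0,0}}{q-1}.$$
   Context: Let $1/s$ denote the inverse of $s$ modulo $q-1$, so $x\mapsto x^{1/s}$ is the inverse permutation of $x\mapsto x^s$ on $K$. For $t=(t_1,\dots,t_k)\in K^k$ and $v=(v_1,\dots,v_k)\in K^k$ write $t\cdot v=t_1v_1+\cdots+t_kv_k$ and $\langle v\rangle=(v_1^s+\cdots+v_k^s)^{1/s}$. For $a,b\in K$, $Q^t_{a,b}$ denotes the number of $v\in K^k$ with $t\cdot v=a$ and $\langle v\rangle=b$. *)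

theory Defs
  imports Complex_Main "HOL-Library.Cardinality"
begin

definition dotp :: "'a::field list \<Rightarrow> 'a list \<Rightarrow> 'a" where
  "dotp t v = sum_list (map2 (*) t v)"

text \<open>The s-norm of v: (v_1^s + ... + v_k^s)^(1/s), where x \<mapsto> x^(1/s) is the
  inverse permutation of x \<mapsto> x^s on K.\<close>
definition snorm :: "nat \<Rightarrow> 'a::field list \<Rightarrow> 'a" where
  "snorm s v = inv (\<lambda>x::'a. x ^ s) (sum_list (map (\<lambda>x. x ^ s) v))"

definition Qcount :: "nat \<Rightarrow> 'a::{finite,field} list \<Rightarrow> 'a \<Rightarrow> 'a \<Rightarrow> nat" where
  "Qcount s t a b = card {v. length v = length t \<and> dotp t v = a \<and> snorm s v = b}"

end

theory Submission
  imports Defs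
begin

text \<open>Because \<open>x \<mapsto> x^s\<close> is a bijection of \<open>K\<close>, the condition \<open>\<langle>v\<rangle> = b\<close> means
  \<open>\<Sum> v_i^s = b^s\<close>, and scaling \<open>v\<close> by \<open>b\<close> gives \<open>Q^t_{a,b} = Q^t_{a/b,1}\<close>.
  With \<open>c = a/b\<close>, sort the solutions \<open>(w, v)\<close> of \<open>c w + t\<cdot>v = 0\<close>, \<open>w^s + \<Sum> v_i^s = 0\<close>
  by their first coordinate: \<open>w = 0\<close> contributes \<open>Q^t_{0,0}\<close>, and for each of the \<open>q - 1\<close>
  values \<open>w \<noteq> 0\<close> the substitution \<open>v = -w u\<close> (note \<open>(-w)^s = -w^s\<close>) turns the equations
  into \<open>t\<cdot>u = c\<close>, \<open>\<Sum> u_i^s = 1\<close>, so it contributes \<open>Q^t_{c,1}\<close>.\<close>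

lemma finite_field_power_card_minus_one:
  fixes x :: "'a::{finite,field}"
  assumes "x \<noteq> 0"
  shows "x ^ (CARD('a) - 1) = 1"
proof -
  let ?U = "UNIV - {0::'a}"
  have "inj_on ((*) x) ?U"
    using assms by (auto simp: inj_on_def)
  moreover have "(*) x ` ?U = ?U"
  proof
    show "?U \<subseteq> (*) x ` ?U"
    proof
      fix y assume "y \<in> ?U"
      then have "y = x * (y / x)" "y / x \<in> ?U" using assms by auto
      then show "y \<in> (*) x ` ?U" by blast
    qed
  qed (use assms in auto)
  ultimately have "prod id ?U = prod ((*) x) ?U"
    using prod.reindex[of "(*) x" ?U id] by simp
  also have "\<dots> = x ^ (CARD('a) - 1) * prod id ?U"
    by (simp add: prod.distrib card_Diff_singleton)
  finally show ?thesis
    by simp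
qed

lemma bij_power_if_coprime:
  assumes "s > 0" and "coprime s (CARD('a) - 1)"
  shows "bij (\<lambda>x::'a::{finite,field}. x ^ s)"
proof -
  have "x = y" if eq: "x ^ s = y ^ s" for x y :: 'a
  proof (cases "y = 0")
    case True
    then show ?thesis using eq assms(1) by (simp add: zero_power)
  next
    case False
    define z where "z = x / y"
    have "z ^ s = 1" using eq False by (simp add: z_def power_divide)
    then have "z \<noteq> 0" using assms(1) by (metis zero_neq_one zero_power)
    then have fermat: "z ^ (CARD('a) - 1) = 1"
      by (rule finite_field_power_card_minus_one)
    obtain m n where bezout: "s * m = (CARD('a) - 1) * n + 1"
      using bezout_nat[of s "CARD('a) - 1"] assms by auto
    have "z = z ^ ((CARD('a) - 1) * n + 1)"
      by (simp only: power_add power_mult fermat) simp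
    also have "\<dots> = (z ^ s) ^ m"
      by (simp only: power_mult[symmetric] bezout)
    finally have "z = 1" using \<open>z ^ s = 1\<close> by simp
    then show ?thesis using False by (simp add: z_def)
  qed
  then have "inj (\<lambda>x::'a. x ^ s)" by (rule injI)
  then show ?thesis by (simp add: bij_def finite_UNIV_inj_surj)
qed

lemma power_minus_if_bij_power:
  fixes x :: "'a::field"
  assumes "bij (\<lambda>x::'a. x ^ s)"
  shows "(- x) ^ s = - (x ^ s)"
proof (cases "even s")
  case True
  \<comment> \<open>then \<open>(-1)^s = 1^s\<close>, so injectivity forces characteristic 2\<close>
  with assms have "(-1::'a) = 1"
    by (metis bij_is_inj injD power_minus_even)
  then have "- y = y" for y :: 'a
    by (metis mult_minus1 mult_1)
  then show ?thesis by (simp only:)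
next
  case False
  then show ?thesis by simp
qed

lemma bij_mult_nonzero:
  fixes x :: "'a::field"
  assumes "x \<noteq> 0"
  shows "bij ((*) x)"
  using assms by (intro o_bij[where g = "(*) (inverse x)"]) (auto simp: fun_eq_iff)

definition power_sum :: "nat \<Rightarrow> 'a::field list \<Rightarrow> 'a" where
  "power_sum s v = sum_list (map (\<lambda>x. x ^ s) v)"

lemma power_sum_Cons [simp]: "power_sum s (w # v) = w ^ s + power_sum s v"
  by (simp add: power_sum_def)

lemma power_sum_map_mult: "power_sum s (map ((*) x) v) = x ^ s * power_sum s v"
  by (induction v) (simp_all add: power_sum_def algebra_simps)

lemma dotp_Cons [simp]: "dotp (c # t) (w # v) = c * w + dotp t v"
  by (simp add: dotp_def)

lemma dotp_map_mult: "dotp t (map ((*) x) v) = x * dotp t v"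
proof (induction t arbitrary: v)
  case Nil
  then show ?case by (simp add: dotp_def)
next
  case (Cons c t)
  then show ?case by (cases v) (simp_all add: dotp_def algebra_simps)
qed

lemma snorm_eq_iff_power_sum:
  fixes v :: "'a::field list"
  assumes "bij (\<lambda>x::'a. x ^ s)"
  shows "snorm s v = y \<longleftrightarrow> power_sum s v = y ^ s"
proof -
  have "snorm s v = y \<longleftrightarrow> y = inv (\<lambda>x. x ^ s) (power_sum s v)"
    by (auto simp: snorm_def power_sum_def)
  also have "\<dots> \<longleftrightarrow> power_sum s v = y ^ s"
    using bij_inv_eq_iff[OF assms, of y "power_sum s v"] by auto
  finally show ?thesis .
qed

lemma finite_lists_length:
  "finite {v :: 'a::finite list. length v = k \<and> P v}"
  using finite_lists_length_eq[of "UNIV :: 'a set" k] by (rule rev_finite_subset) auto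

lemma card_lists_map_bij:
  assumes "bij f"
  shows "card {v. length v = k \<and> P v} = card {u. length u = k \<and> P (map f u)}"
proof -
  have "{v. length v = k \<and> P v} = map f ` {u. length u = k \<and> P (map f u)}"
  proof (intro equalityI subsetI)
    fix v assume "v \<in> {v. length v = k \<and> P v}"
    moreover have "v = map f (map (inv f) v)"
      using assms by (simp add: bij_is_surj surj_f_inv_f map_idI)
    ultimately show "v \<in> map f ` {u. length u = k \<and> P (map f u)}"
      by (intro image_eqI[of _ _ "map (inv f) v"]) auto
  qed auto
  moreover have "inj_on (map f) A" for A
    using assms by (meson bij_is_inj inj_mapI inj_on_subset subset_UNIV)
  ultimately show ?thesis
    by (simp add: card_image)
qed

lemma card_lists_length_Suc:
  "card {l :: 'a::finite list. length l = Suc k \<and> P l}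
    = (\<Sum>w\<in>UNIV. card {v. length v = k \<and> P (w # v)})"
proof -
  have "{l :: 'a list. length l = Suc k \<and> P l}
      = (\<Union>w. (Cons w) ` {v. length v = k \<and> P (w # v)})"
    by (auto simp: length_Suc_conv)
  also have "card \<dots> = (\<Sum>w\<in>UNIV. card ((Cons w) ` {v. length v = k \<and> P (w # v)}))"
    by (rule card_UN_disjoint) (auto simp: finite_lists_length)
  also have "\<dots> = (\<Sum>w\<in>UNIV. card {v. length v = k \<and> P (w # v)})"
    by (intro sum.cong refl card_image) auto
  finally show ?thesis .
qed

lemma Qcount_eq_card_power_sum:
  fixes t :: "'a::{finite,field} list"
  assumes "bij (\<lambda>x::'a. x ^ s)"
  shows "Qcount s t a b = card {v. length v = length t \<and> dotp t v = a \<and> power_sum s v = b ^ s}"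
  unfolding Qcount_def snorm_eq_iff_power_sum[OF assms] ..

lemma Qcount_homogeneous:
  fixes t :: "'a::{finite,field} list"
  assumes "bij (\<lambda>x::'a. x ^ s)" and "b \<noteq> 0"
  shows "Qcount s t a b = Qcount s t (a / b) 1"
proof -
  have "Qcount s t a b = card {u. length u = length t \<and>
      dotp t (map ((*) b) u) = a \<and> power_sum s (map ((*) b) u) = b ^ s}"
    unfolding Qcount_eq_card_power_sum[OF assms(1)]
    by (rule card_lists_map_bij[OF bij_mult_nonzero[OF assms(2)]])
  also have "\<dots> = Qcount s t (a / b) 1"
    unfolding Qcount_eq_card_power_sum[OF assms(1)] dotp_map_mult power_sum_map_mult
    using assms(2) by (intro arg_cong[where f = card] Collect_cong) (auto simp: field_simps)
  finally show ?thesis .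
qed

lemma card_Cons_fibre_nonzero:
  fixes t :: "'a::{finite,field} list"
  assumes "bij (\<lambda>x::'a. x ^ s)" and "w \<noteq> 0"
  shows "card {v. length v = length t \<and> dotp (c # t) (w # v) = 0 \<and> power_sum s (w # v) = 0}
    = Qcount s t c 1"
proof -
  let ?scale = "map ((*) (- w))"
  have "card {v. length v = length t \<and> dotp (c # t) (w # v) = 0 \<and> power_sum s (w # v) = 0}
      = card {u. length u = length t \<and>
          dotp (c # t) (w # ?scale u) = 0 \<and> power_sum s (w # ?scale u) = 0}"
    using assms(2) by (intro card_lists_map_bij bij_mult_nonzero) simp
  also have "\<dots> = Qcount s t c 1"
    unfolding Qcount_eq_card_power_sum[OF assms(1)]
  proof (intro arg_cong[where f = card] Collect_cong)
    fix u :: "'a list"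
    have "dotp (c # t) (w # ?scale u) = w * (c - dotp t u)"
      by (simp add: dotp_map_mult algebra_simps)
    moreover have "power_sum s (w # ?scale u) = w ^ s * (1 - power_sum s u)"
      by (simp add: power_sum_map_mult power_minus_if_bij_power[OF assms(1)] algebra_simps)
    ultimately show "(length u = length t \<and>
          dotp (c # t) (w # ?scale u) = 0 \<and> power_sum s (w # ?scale u) = 0) \<longleftrightarrow>
        (length u = length t \<and> dotp t u = c \<and> power_sum s u = 1 ^ s)"
      using assms(2) by auto
  qed
  finally show ?thesis .
qed

lemma Qcount_Cons_zero_zero:
  fixes t :: "'a::{finite,field} list"
  assumes "bij (\<lambda>x::'a. x ^ s)" and "s > 0"
  shows "Qcount s (c # t) 0 0 = Qcount s t 0 0 + (CARD('a) - 1) * Qcount s t c 1"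
proof -
  let ?fibre = "\<lambda>w. card {v. length v = length t \<and>
    dotp (c # t) (w # v) = 0 \<and> power_sum s (w # v) = 0}"
  have "Qcount s (c # t) 0 0 = (\<Sum>w\<in>UNIV. ?fibre w)"
    unfolding Qcount_eq_card_power_sum[OF assms(1)]
    using assms(2) by (simp add: card_lists_length_Suc zero_power)
  also have "\<dots> = ?fibre 0 + (\<Sum>w\<in>UNIV - {0}. ?fibre w)"
    by (simp add: sum.remove[of UNIV 0])
  also have "?fibre 0 = Qcount s t 0 0"
    unfolding Qcount_eq_card_power_sum[OF assms(1)] using assms(2) by (simp add: zero_power)
  also have "(\<Sum>w\<in>UNIV - {0}. ?fibre w) = (CARD('a) - 1) * Qcount s t c 1"
    using card_Cons_fibre_nonzero[OF assms(1)] by (simp add: card_Diff_singleton)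
  finally show ?thesis .
qed

theorem lemma4p6:
  fixes s :: nat and t :: "'a::{finite,field} list" and a b :: 'a
  assumes "s > 0" and "coprime s (CARD('a) - 1)"
    and "t \<noteq> []" and "\<forall>x\<in>set t. x \<noteq> 0" and "b \<noteq> 0"
  shows "real (Qcount s t a b) =
    (real (Qcount s ((a / b) # t) 0 0) - real (Qcount s t 0 0)) / (real CARD('a) - 1)"
proof -
  have bij: "bij (\<lambda>x::'a. x ^ s)"
    using assms(1,2) by (rule bij_power_if_coprime)
  have "card {0::'a, 1} \<le> CARD('a)"
    by (rule card_mono) auto
  then have "CARD('a) > 1" by simp
  moreover have "Qcount s ((a / b) # t) 0 0 = Qcount s t 0 0 + (CARD('a) - 1) * Qcount s t a b"
    using Qcount_Cons_zero_zero[OF bij assms(1)] Qcount_homogeneous[OF bij assms(5)] by simp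
  ultimately show ?thesis
    by (simp add: field_simps)
qed

end
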